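(* Let $q>0$, $\mu=\sqrt q$, $H$ a $d$-dimensional Hilbert space with orthonormal basis $(\psi_r)$ and $S$ as below. For all $k=1,\dots,d-1$, $(S^*\otimes1_{H^{\otimes k}})(1_{H^{\otimes k}}\otimes S)=(d-k)!_q\,k!_q\,(-\mu)^{k(d-k)}\,\varepsilon(E_k)$ as operators on $H^{\otimes k}$. Consequently, with $R_k:=\frac{1}{\mu^{k(d-k)/2}\sqrt{k!_q}\sqrt{(d-k)!_q}}S$ and $\overline R_k:=(-1)^{k(d-k)}R_k$, one has $R_k\in\varepsilon(E_{d-k})H^{\otimes(d-k)}\otimes\varepsilon(E_k)H^{\otimes k}$, $\overline R_k\in\varepsilon(E_k)H^{\otimes k}\otimes\varepsilon(E_{d-k})H^{\otimes(d-k)}$, and $(\overline R_k^*\otimes1_{H^{\otimes k}})(1_{H^{\otimes k}}\otimes R_k)=\varepsilon(E_k)$, $(R_k^*\otimes1_{H^{\otimes(d-k)}})(1_{H^{\otimes(d-k)}}\otimes\overline R_k)=\varepsilon(E_{d-k})$; thus the subobject $\varepsilon(E_{d-k})H^{\otimes(d-k)}$ is a conjugate of the subobject $\varepsilon(E_k)H^{\otimes k}$.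
   Context: $g_q$ on $H\otimes H$: $g_q\psi_i\otimes\psi_j=-\mu\psi_j\otimes\psi_i$ ($i<j$), $g_q\psi_i\otimes\psi_i=-\psi_i\otimes\psi_i$, $g_q\psi_i\otimes\psi_j=(q-1)\psi_i\otimes\psi_j-\mu\psi_j\otimes\psi_i$ ($i>j$); Jimbo–Woronowicz representation $\varepsilon(g_i)=1_{H^{\otimes(i-1)}}\otimes g_q\otimes1$ of the Hecke algebras $H_m(q)$ (generators $g_i$, braid relations, $g_i^2=(q-1)g_i+q$). $A_1=1$, $A_{m+1}=\sum_{i=0}^mg_i\cdots g_1\sigma(A_m)$, $\sigma(g_i)=g_{i+1}$, $m!_q=\prod_{j=1}^m(1+\dots+q^{j-1})$, $E_m=A_m/m!_q$. $S:=\sum_{p\in\mathbb P_d}(-\mu)^{i(p)}\psi_{p(1)}\otimes\dots\otimes\psi_{p(d)}\in H^{\otimes d}$, $i(p)$ the number of inversions, viewed as a map $\mathbb C\to H^{\otimes d}$. *)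

theory Defs
  imports Complex_Main
begin

text \<open>H has orthonormal basis psi_0,...,psi_(d-1). A vector of H^{(x)n} is a
coefficient function on index lists (basis psi_(x1) (x) ... (x) psi_(xn)); an operator
H^{(x)m} -> H^{(x)n} is a kernel K out in (matrix entry <psi_out, K psi_in>).\<close>

definition idx :: "nat \<Rightarrow> nat \<Rightarrow> nat list set" where
  "idx d n = {xs. length xs = n \<and> set xs \<subseteq> {..<d}}"

type_synonym kern = "nat list \<Rightarrow> nat list \<Rightarrow> complex"
type_synonym vec = "nat list \<Rightarrow> complex"

definition kcomp :: "nat \<Rightarrow> nat \<Rightarrow> kern \<Rightarrow> kern \<Rightarrow> kern" where
  "kcomp d m A B = (\<lambda>z x. \<Sum>y\<in>idx d m. A z y * B y x)"

text \<open>tensor product A (x) B, where A : H^{(x)m1} -> H^{(x)n1}\<close>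
definition ktens :: "nat \<Rightarrow> nat \<Rightarrow> kern \<Rightarrow> kern \<Rightarrow> kern" where
  "ktens n1 m1 A B = (\<lambda>z x. A (take n1 z) (take m1 x) * B (drop n1 z) (drop m1 x))"

definition kid :: kern where
  "kid = (\<lambda>z x. if z = x then 1 else 0)"

definition kadj :: "kern \<Rightarrow> kern" where
  "kadj A = (\<lambda>z x. cnj (A x z))"

text \<open>a vector v in H^{(x)n} viewed as the map C -> H^{(x)n}\<close>
definition vk :: "vec \<Rightarrow> kern" where
  "vk v = (\<lambda>z x. v z)"

definition kapp :: "nat \<Rightarrow> nat \<Rightarrow> kern \<Rightarrow> vec \<Rightarrow> vec" where
  "kapp d m A v = (\<lambda>z. \<Sum>x\<in>idx d m. A z x * v x)"

text \<open>g_q on H (x) H: coefficient of psi_a (x) psi_b in g_q(psi_i (x) psi_j)\<close>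
definition gq :: "real \<Rightarrow> nat \<Rightarrow> nat \<Rightarrow> nat \<Rightarrow> nat \<Rightarrow> complex" where
  "gq q a b i j =
    (let mu = complex_of_real (sqrt q) in
     if i < j then (if (a, b) = (j, i) then - mu else 0)
     else if i = j then (if (a, b) = (i, i) then -1 else 0)
     else (if (a, b) = (i, j) then complex_of_real (q - 1)
           else if (a, b) = (j, i) then - mu else 0))"

text \<open>Jimbo--Woronowicz: eps(g_i) = 1_{H^{(x)(i-1)}} (x) g_q (x) 1 on H^{(x)m}, 1 \<le> i < m\<close>
definition epsg :: "real \<Rightarrow> nat \<Rightarrow> nat \<Rightarrow> kern" where
  "epsg q m i = (\<lambda>z x.
     if (\<forall>j<m. j \<noteq> i - 1 \<and> j \<noteq> i \<longrightarrow> z ! j = x ! j)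
     then gq q (z ! (i - 1)) (z ! i) (x ! (i - 1)) (x ! i) else 0)"

fun epsw :: "nat \<Rightarrow> real \<Rightarrow> nat \<Rightarrow> nat list \<Rightarrow> kern" where
  "epsw d q m [] = kid"
| "epsw d q m (i # w) = kcomp d m (epsg q m i) (epsw d q m w)"

text \<open>A_m as a sum of words (all coefficients 1): A_1 = 1,
  A_{m+1} = sum_{i=0}^m g_i ... g_1 sigma(A_m), sigma(g_i) = g_{i+1}.
  (A_0 := 1 is an irrelevant convention.)\<close>
fun Aw :: "nat \<Rightarrow> nat list list" where
  "Aw 0 = [[]]"
| "Aw (Suc 0) = [[]]"
| "Aw (Suc (Suc m)) =
     concat (map (\<lambda>i. map (\<lambda>w. rev [1..<Suc i] @ map Suc w) (Aw (Suc m))) [0..<Suc (Suc m)])"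

definition qfact :: "real \<Rightarrow> nat \<Rightarrow> real" where
  "qfact q m = (\<Prod>j=1..m. \<Sum>i<j. q ^ i)"

definition epsA :: "nat \<Rightarrow> real \<Rightarrow> nat \<Rightarrow> kern" where
  "epsA d q m = (\<lambda>z x. sum_list (map (\<lambda>w. epsw d q m w z x) (Aw m)))"

definition epsE :: "nat \<Rightarrow> real \<Rightarrow> nat \<Rightarrow> kern" where
  "epsE d q m = (\<lambda>z x. epsA d q m z x / complex_of_real (qfact q m))"

definition inversions :: "nat list \<Rightarrow> nat" where
  "inversions xs = card {(i, j). i < j \<and> j < length xs \<and> xs ! j < xs ! i}"

definition Svec :: "nat \<Rightarrow> real \<Rightarrow> vec" where
  "Svec d q xs = (if distinct xs \<and> set xs = {..<d}
                  then (- complex_of_real (sqrt q)) ^ inversions xs else 0)"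

definition Rvec :: "nat \<Rightarrow> real \<Rightarrow> nat \<Rightarrow> vec" where
  "Rvec d q k = (\<lambda>xs. complex_of_real
      (1 / (sqrt q powr (real (k * (d - k)) / 2) * sqrt (qfact q k) * sqrt (qfact q (d - k))))
      * Svec d q xs)"

definition Rbar :: "nat \<Rightarrow> real \<Rightarrow> nat \<Rightarrow> vec" where
  "Rbar d q k = (\<lambda>xs. (-1) ^ (k * (d - k)) * Rvec d q k xs)"

end

theory Submission
  imports Defs
begin

text \<open>
  For a finite set W of letters let Omega_W be the q-antisymmetric tensor: the sum over all
  arrangements z of W of (-mu)^(inversions z) psi_z. The heart of the argument is the closed
  form eps(A_m) psi_x = (-mu)^(inversions x) Omega_(set x) for injective x (and 0 otherwise).
  It follows by induction along A_(m+1) = (1 + g_1 + g_2 g_1 + ... + g_m ... g_1) sigma(A_m): on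
  psi_a (x) Omega_W this cycle sum produces the q-wedge psi_a /\ Omega_W, i.e.
  (-mu)^#{w in W. w < a} Omega_(W + a), or 0 if a is in W, which is checked by peeling off the
  first tensor factor with g_1 and using that the relevant powers of q sum geometrically.

  With the closed form, the entry (z, x) of (S^* (x) 1)(1 (x) S) is a sum over the words m on the
  complementary letters of Omega(x m) Omega(m z); comparing inversions of x m and m z gives the
  factor (-mu)^(k (d - k)) times the kernel of eps(A_k), and the remaining sum of Omega(m)^2 is
  (d - k)!_q. The same norm identity shows that eps(E_a) (x) eps(E_b) fixes S when a + b = d,
  and the normalisation of R_k is exactly what cancels the resulting scalars.
\<close>

section \<open>Index words and inversions\<close>

lemma finite_idx [simp]: "finite (idx d n)"
  unfolding idx_def using finite_lists_length_eq[of "{..<d}" n] by (simp add: conj_commute)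

lemma idx_0 [simp]: "idx d 0 = {[]}"
  by (auto simp: idx_def)

lemma idx_Suc: "idx d (Suc n) = (\<lambda>(c, y). c # y) ` ({..<d} \<times> idx d n)"
proof
  show "idx d (Suc n) \<subseteq> (\<lambda>(c, y). c # y) ` ({..<d} \<times> idx d n)"
  proof
    fix x assume x: "x \<in> idx d (Suc n)"
    then obtain c y where "x = c # y" by (cases x) (auto simp: idx_def)
    with x show "x \<in> (\<lambda>(c, y). c # y) ` ({..<d} \<times> idx d n)"
      by (intro image_eqI[of _ _ "(c, y)"]) (auto simp: idx_def)
  qed
qed (auto simp: idx_def)

lemma sum_idx_Suc: "(\<Sum>x\<in>idx d (Suc n). f x) = (\<Sum>c<d. \<Sum>y\<in>idx d n. f (c # y))"
proof -
  have "inj_on (\<lambda>(c, y). c # y) ({..<d} \<times> idx d n)" by (auto simp: inj_on_def)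
  then have "(\<Sum>x\<in>idx d (Suc n). f x) = (\<Sum>p\<in>{..<d} \<times> idx d n. f (fst p # snd p))"
    unfolding idx_Suc by (subst sum.reindex) (auto simp: case_prod_beta)
  then show ?thesis
    by (simp add: sum.cartesian_product case_prod_beta)
qed

lemma sum_idx_append: "(\<Sum>x\<in>idx d (a + b). f x) = (\<Sum>x\<in>idx d a. \<Sum>y\<in>idx d b. f (x @ y))"
  by (induction a arbitrary: f) (simp_all add: sum_idx_Suc)

lemma inversions_Nil [simp]: "inversions [] = 0"
  by (simp add: inversions_def)

lemma inversions_Cons: "inversions (a # y) = length (filter (\<lambda>b. b < a) y) + inversions y"
proof -
  let ?P = "{(i, j). i < j \<and> j < length (a # y) \<and> (a # y) ! j < (a # y) ! i}"
  let ?Head = "{p\<in>?P. fst p = 0}" and ?Tail = "{p\<in>?P. fst p \<noteq> 0}"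
  have Head: "?Head = (\<lambda>j. (0, Suc j)) ` {j. j < length y \<and> y ! j < a}"
    by (auto simp: image_iff gr0_conv_Suc)
  have Tail: "?Tail = (\<lambda>(i, j). (Suc i, Suc j)) ` {(i, j). i < j \<and> j < length y \<and> y ! j < y ! i}"
  proof (intro set_eqI iffI)
    fix p assume "p \<in> ?Tail"
    then obtain i j where "p = (Suc i, Suc j)" "(i, j) \<in> {(i, j). i < j \<and> j < length y \<and> y ! j < y ! i}"
      by (cases p; cases "fst p"; cases "snd p") auto
    then show "p \<in> (\<lambda>(i, j). (Suc i, Suc j)) ` {(i, j). i < j \<and> j < length y \<and> y ! j < y ! i}"
      by (simp add: image_iff)
  qed auto
  have "finite ?P"
    by (rule finite_subset[of _ "{..<length (a # y)} \<times> {..<length (a # y)}"]) auto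
  have "card (?Head \<union> ?Tail) = card ?Head + card ?Tail"
    by (rule card_Un_disjoint) (use \<open>finite ?P\<close> in auto)
  moreover have "?Head \<union> ?Tail = ?P" by blast
  ultimately have "card ?P = card ?Head + card ?Tail" by simp
  also have "card ?Head = length (filter (\<lambda>b. b < a) y)"
    unfolding Head by (subst card_image) (auto simp: inj_on_def length_filter_conv_card)
  also have "card ?Tail = inversions y"
    unfolding Tail by (subst card_image) (auto simp: inj_on_def inversions_def)
  finally show ?thesis by (simp add: inversions_def)
qed

lemma inversions_append:
  "inversions (x @ y) = inversions x + inversions y + (\<Sum>a\<leftarrow>x. length (filter (\<lambda>b. b < a) y))"
  by (induction x) (auto simp: inversions_Cons)

lemma length_filter_distinct: "distinct y \<Longrightarrow> length (filter P y) = card {b\<in>set y. P b}"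
  by (metis distinct_card distinct_filter set_filter)

definition rank_in :: "nat set \<Rightarrow> nat \<Rightarrow> nat" where
  "rank_in W a = card {w\<in>W. w < a}"

definition cross_count :: "nat set \<Rightarrow> nat set \<Rightarrow> nat" where
  "cross_count X Y = (\<Sum>a\<in>X. \<Sum>b\<in>Y. if b < a then 1 else 0)"

lemma inversions_Cons_distinct:
  "distinct (a # x) \<Longrightarrow> inversions (a # x) = rank_in (set x) a + inversions x"
  by (simp add: inversions_Cons length_filter_distinct rank_in_def)

lemma inversions_append_distinct:
  assumes "distinct x" "distinct y"
  shows "inversions (x @ y) = inversions x + inversions y + cross_count (set x) (set y)"
proof -
  have "length (filter (\<lambda>b. b < a) y) = (\<Sum>b\<in>set y. if b < a then 1 else 0)" for a
    using assms(2) by (simp add: length_filter_distinct sum.If_cases Int_def conj_commute)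
  then show ?thesis
    using assms by (simp add: inversions_append cross_count_def sum_list_distinct_conv_sum_set)
qed

lemma cross_count_add_swap:
  assumes "finite X" "finite Y" "X \<inter> Y = {}"
  shows "cross_count X Y + cross_count Y X = card X * card Y"
proof -
  have "cross_count Y X = (\<Sum>a\<in>X. \<Sum>b\<in>Y. if a < b then 1 else 0)"
    unfolding cross_count_def by (rule sum.swap)
  then have "cross_count X Y + cross_count Y X
      = (\<Sum>a\<in>X. \<Sum>b\<in>Y. (if b < a then 1 else 0) + (if a < b then 1 else 0))"
    unfolding cross_count_def by (simp add: sum.distrib)
  also have "\<dots> = (\<Sum>a\<in>X. \<Sum>b\<in>Y. 1)"
    using assms(3) by (intro sum.cong refl) auto
  finally show ?thesis by simp
qed

lemma rank_in_less_card: "finite W \<Longrightarrow> e \<in> W \<Longrightarrow> rank_in W e < card W"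
  unfolding rank_in_def by (rule psubset_card_mono) auto

lemma rank_in_strict_mono: "finite W \<Longrightarrow> e \<in> W \<Longrightarrow> e < e' \<Longrightarrow> rank_in W e < rank_in W e'"
  unfolding rank_in_def by (rule psubset_card_mono) auto

lemma bij_betw_rank_in: "finite W \<Longrightarrow> bij_betw (rank_in W) W {..<card W}"
proof -
  assume fin: "finite W"
  have inj: "inj_on (rank_in W) W"
    unfolding inj_on_def by (metis fin linorder_neqE_nat rank_in_strict_mono nat_less_le)
  have "rank_in W ` W \<subseteq> {..<card W}" using rank_in_less_card[OF fin] by auto
  moreover have "card (rank_in W ` W) = card {..<card W}" using card_image[OF inj] by simp
  ultimately have "rank_in W ` W = {..<card W}" by (intro card_subset_eq) auto
  with inj show ?thesis by (simp add: bij_betw_def)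
qed

lemma sum_rank_in: "finite W \<Longrightarrow> (\<Sum>e\<in>W. f (rank_in W e)) = (\<Sum>j<card W. f j)"
  using sum.reindex_bij_betw[OF bij_betw_rank_in, of W f] by simp

lemma geometric_sum_rank_in:
  assumes "finite W"
  shows "((Q::'a::comm_ring_1) - 1) * (\<Sum>e\<in>{e\<in>W. e < a}. Q ^ rank_in W e) = Q ^ rank_in W a - 1"
proof -
  let ?V = "{e\<in>W. e < a}"
  have "rank_in W e = rank_in ?V e" if "e \<in> ?V" for e
    using that unfolding rank_in_def by (intro arg_cong[where f = card]) auto
  then have "(\<Sum>e\<in>?V. Q ^ rank_in W e) = (\<Sum>e\<in>?V. Q ^ rank_in ?V e)"
    by simp
  also have "\<dots> = (\<Sum>j<card ?V. Q ^ j)"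
    using assms by (intro sum_rank_in) simp
  finally show ?thesis by (simp add: rank_in_def power_diff_1_eq)
qed

lemma rank_in_empty [simp]: "rank_in {} a = 0"
  by (simp add: rank_in_def)

lemma rank_in_remove: "rank_in (W - {e}) e = rank_in W e"
  unfolding rank_in_def by (rule arg_cong[where f = card]) auto

lemma rank_in_insert_self: "rank_in (insert a W) a = rank_in W a"
  unfolding rank_in_def by (rule arg_cong[where f = card]) auto

lemma rank_in_exchange:
  assumes "finite W" "c \<in> W" "a \<notin> W"
  shows "rank_in W c + 1 + rank_in (W - {c}) a = rank_in W a + rank_in (insert a W) c"
proof (cases "c < a")
  case True
  then have "{w\<in>W. w < a} = insert c {w\<in>W - {c}. w < a}" "{w\<in>insert a W. w < c} = {w\<in>W. w < c}"
    using assms(2) by auto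
  then show ?thesis using assms(1) by (simp add: rank_in_def)
next
  case False
  then have "a < c" using assms(2,3) by (cases "a = c") auto
  then have "{w\<in>W - {c}. w < a} = {w\<in>W. w < a}" "{w\<in>insert a W. w < c} = insert a {w\<in>W. w < c}"
    by auto
  then show ?thesis using assms(1,3) by (simp add: rank_in_def)
qed

section \<open>q-antisymmetric tensors\<close>

lemma qfact_0 [simp]: "qfact q 0 = 1"
  by (simp add: qfact_def)

lemma qfact_Suc: "qfact q (Suc n) = qfact q n * (\<Sum>i<Suc n. q ^ i)"
  unfolding qfact_def by (simp add: prod.nat_ivl_Suc')

lemma qfact_pos: "q > 0 \<Longrightarrow> qfact q n > 0"
  unfolding qfact_def by (intro prod_pos) (auto intro!: sum_pos simp: lessThan_empty_iff)

definition minus_mu :: "real \<Rightarrow> complex" where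
  "minus_mu q = - complex_of_real (sqrt q)"

lemma minus_mu_power_square: "q \<ge> 0 \<Longrightarrow> minus_mu q ^ n * minus_mu q ^ n = complex_of_real q ^ n"
  unfolding minus_mu_def by (simp flip: power_mult_distrib of_real_mult)

lemma cnj_minus_mu [simp]: "cnj (minus_mu q) = minus_mu q"
  by (simp add: minus_mu_def)

definition qwedge :: "real \<Rightarrow> nat set \<Rightarrow> vec" where
  "qwedge q W z = (if distinct z \<and> set z = W then minus_mu q ^ inversions z else 0)"

lemma Svec_eq_qwedge: "Svec d q = qwedge q {..<d}"
  by (rule ext) (simp add: Svec_def qwedge_def minus_mu_def)

lemma qwedge_Nil [simp]: "qwedge q W [] = (if W = {} then 1 else 0)"
  by (auto simp: qwedge_def)

lemma qwedge_Cons: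
  "qwedge q W (e # u) = (if e \<in> W then minus_mu q ^ rank_in W e * qwedge q (W - {e}) u else 0)"
proof (cases "e \<in> W \<and> distinct u \<and> set u = W - {e}")
  case True
  then have "set (e # u) = W" by auto
  with True show ?thesis
    by (simp add: qwedge_def inversions_Cons_distinct rank_in_remove power_add)
next
  case False
  then show ?thesis by (auto simp: qwedge_def)
qed

lemma qwedge_append:
  "qwedge q W (x @ y) =
    (if distinct x \<and> distinct y \<and> set x \<inter> set y = {} \<and> set x \<union> set y = W
     then minus_mu q ^ (inversions x + inversions y + cross_count (set x) (set y)) else 0)"
  by (auto simp: qwedge_def inversions_append_distinct)

lemma cnj_qwedge [simp]: "cnj (qwedge q W z) = qwedge q W z"
  by (simp add: qwedge_def)

lemma sum_qwedge_square:
  assumes "q \<ge> 0" "W \<subseteq> {..<d}" "card W = n"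
  shows "(\<Sum>z\<in>idx d n. qwedge q W z * qwedge q W z) = complex_of_real (qfact q n)"
  using assms(2,3)
proof (induction n arbitrary: W)
  case 0
  then have "W = {}" using finite_subset[OF 0(1)] by auto
  then show ?case by simp
next
  case (Suc n)
  have fin: "finite W" using finite_subset[OF Suc.prems(1)] by auto
  have card_remove: "card (W - {c}) = n" if "c \<in> W" for c
    using Suc.prems(2) fin that by simp
  have "(\<Sum>z\<in>idx d n. qwedge q W (c # z) * qwedge q W (c # z))
      = (if c \<in> W then complex_of_real q ^ rank_in W c * complex_of_real (qfact q n) else 0)" for c
  proof (cases "c \<in> W")
    case True
    have "(\<Sum>z\<in>idx d n. qwedge q W (c # z) * qwedge q W (c # z))
        = (minus_mu q ^ rank_in W c * minus_mu q ^ rank_in W c)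
          * (\<Sum>z\<in>idx d n. qwedge q (W - {c}) z * qwedge q (W - {c}) z)"
      using True by (simp add: qwedge_Cons sum_distrib_left algebra_simps)
    also have "\<dots> = complex_of_real q ^ rank_in W c * complex_of_real (qfact q n)"
      using Suc.IH[of "W - {c}"] Suc.prems(1) card_remove[OF True] by (auto simp: minus_mu_power_square[OF assms(1)])
    finally show ?thesis using True by simp
  qed (simp add: qwedge_Cons)
  then have "(\<Sum>z\<in>idx d (Suc n). qwedge q W z * qwedge q W z)
      = (\<Sum>c\<in>W. complex_of_real q ^ rank_in W c) * complex_of_real (qfact q n)"
    using Suc.prems(1) by (simp add: sum_idx_Suc sum.If_cases sum_distrib_right Int_absorb1)
  also have "\<dots> = (\<Sum>j<Suc n. complex_of_real q ^ j) * complex_of_real (qfact q n)"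
    using sum_rank_in[OF fin, of "\<lambda>j. complex_of_real q ^ j"] Suc.prems by simp
  finally show ?case by (simp add: qfact_Suc)
qed

section \<open>Kernels and the action of words in the Hecke generators\<close>

lemma if_zero_mult: "(if P then a else 0) * b = (if P then a * b else (0::'a::mult_zero))"
  by simp

lemma sum_if_zero: "(\<Sum>x\<in>A. if P then f x else 0) = (if P then \<Sum>x\<in>A. f x else 0)"
  by simp

lemma kapp_kid: "z \<in> idx d m \<Longrightarrow> kapp d m kid v z = v z"
  unfolding kapp_def kid_def by (simp add: of_bool_def[symmetric])

lemma kapp_kid_column: "x \<in> idx d m \<Longrightarrow> kapp d m K (\<lambda>y. kid y x) z = K z x"
  unfolding kapp_def kid_def by (simp add: of_bool_def[symmetric])

lemma kapp_kcomp: "kapp d m (kcomp d m A B) v z = kapp d m A (kapp d m B v) z"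
  unfolding kapp_def kcomp_def
  by (simp add: sum_distrib_left sum_distrib_right mult.assoc) (rule sum.swap)

lemma kapp_cong: "(\<And>x. x \<in> idx d m \<Longrightarrow> v x = v' x) \<Longrightarrow> kapp d m A v z = kapp d m A v' z"
  unfolding kapp_def by (intro sum.cong refl) simp

lemma kapp_sum: "kapp d m A (\<lambda>x. \<Sum>i\<in>I. f i x) z = (\<Sum>i\<in>I. kapp d m A (f i) z)"
  unfolding kapp_def by (simp add: sum_distrib_left) (rule sum.swap)

lemma kapp_scale: "kapp d m A (\<lambda>x. c * v x) z = c * kapp d m A v z"
  unfolding kapp_def by (simp add: sum_distrib_left algebra_simps)

lemma kapp_ktens:
  "kapp d (a + b) (ktens a a A B) v z =
    (\<Sum>x\<in>idx d a. \<Sum>y\<in>idx d b. A (take a z) x * B (drop a z) y * v (x @ y))"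
  unfolding kapp_def sum_idx_append
  by (intro sum.cong refl) (simp add: ktens_def idx_def)

definition act_word :: "nat \<Rightarrow> real \<Rightarrow> nat \<Rightarrow> nat list \<Rightarrow> vec \<Rightarrow> vec" where
  "act_word d q m w v = foldr (\<lambda>i u. kapp d m (epsg q m i) u) w v"

lemma act_word_Nil [simp]: "act_word d q m [] v = v"
  by (simp add: act_word_def)

lemma act_word_Cons: "act_word d q m (i # w) v = kapp d m (epsg q m i) (act_word d q m w v)"
  by (simp add: act_word_def)

lemma act_word_append: "act_word d q m (u @ w) v = act_word d q m u (act_word d q m w v)"
  by (simp add: act_word_def)

lemma act_word_zero [simp]: "act_word d q m w (\<lambda>x. 0) = (\<lambda>z. 0)"
  by (induction w) (simp_all add: act_word_Cons kapp_def)

lemma act_word_cong: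
  "z \<in> idx d m \<Longrightarrow> (\<And>x. x \<in> idx d m \<Longrightarrow> v x = v' x) \<Longrightarrow> act_word d q m w v z = act_word d q m w v' z"
  by (induction w arbitrary: z) (auto simp: act_word_Cons intro!: kapp_cong)

lemma kapp_epsw: "z \<in> idx d m \<Longrightarrow> kapp d m (epsw d q m w) v z = act_word d q m w v z"
  by (induction w arbitrary: z) (auto simp: kapp_kid act_word_Cons kapp_kcomp intro!: kapp_cong)

lemma act_word_sum: "act_word d q m w (\<lambda>x. \<Sum>i\<in>I. f i x) = (\<lambda>z. \<Sum>i\<in>I. act_word d q m w (f i) z)"
  by (induction w) (simp_all add: act_word_Cons kapp_sum)

lemma act_word_scale: "act_word d q m w (\<lambda>x. c * v x) = (\<lambda>z. c * act_word d q m w v z)"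
  by (induction w) (simp_all add: act_word_Cons kapp_scale)

lemma epsg_Suc_Cons:
  assumes "1 \<le> i" "length z = m" "length y = m"
  shows "epsg q (Suc m) (Suc i) (c' # z) (c # y) = (if c = c' then epsg q m i z y else 0)"
proof -
  obtain i' where i: "i = Suc i'" using assms(1) by (cases i) auto
  have "(\<forall>j<Suc m. j \<noteq> Suc i - 1 \<and> j \<noteq> Suc i \<longrightarrow> (c' # z) ! j = (c # y) ! j)
     = (c' = c \<and> (\<forall>j<m. j \<noteq> i - 1 \<and> j \<noteq> i \<longrightarrow> z ! j = y ! j))"
    unfolding i by (simp add: All_less_Suc2)
  then show ?thesis unfolding epsg_def i by auto
qed

lemma kapp_epsg_Suc:
  assumes "1 \<le> i" "z \<in> idx d (Suc m)"
  shows "kapp d (Suc m) (epsg q (Suc m) (Suc i)) v z = kapp d m (epsg q m i) (\<lambda>y. v (hd z # y)) (tl z)"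
proof -
  obtain c' z' where z: "z = c' # z'" "c' < d" "z' \<in> idx d m"
    using assms(2) by (cases z) (auto simp: idx_def)
  have "epsg q (Suc m) (Suc i) z (c # y) = (if c = c' then epsg q m i z' y else 0)"
    if "y \<in> idx d m" for c y
    using that z assms(1) by (simp add: epsg_Suc_Cons idx_def)
  then have "(\<Sum>y\<in>idx d m. epsg q (Suc m) (Suc i) z (c # y) * v (c # y))
      = (if c = c' then \<Sum>y\<in>idx d m. epsg q m i z' y * v (c # y) else 0)" for c
    by (cases "c = c'") (simp_all cong: sum.cong)
  then show ?thesis
    using z by (simp add: kapp_def sum_idx_Suc)
qed

lemma act_word_map_Suc:
  "set w \<subseteq> {1..} \<Longrightarrow> z \<in> idx d (Suc m) \<Longrightarrow>
   act_word d q (Suc m) (map Suc w) v z = act_word d q m w (\<lambda>y. v (hd z # y)) (tl z)"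
proof (induction w arbitrary: z)
  case Nil
  then show ?case by (cases z) (auto simp: idx_def)
next
  case (Cons i w)
  have hd_Cons: "hd z # y \<in> idx d (Suc m)" if "y \<in> idx d m" for y
    using that Cons.prems(2) by (cases z) (auto simp: idx_def)
  have "act_word d q (Suc m) (map Suc (i # w)) v z
      = kapp d m (epsg q m i) (\<lambda>y. act_word d q (Suc m) (map Suc w) v (hd z # y)) (tl z)"
    using Cons.prems by (simp add: act_word_Cons kapp_epsg_Suc)
  also have "\<dots> = kapp d m (epsg q m i) (act_word d q m w (\<lambda>y. v (hd z # y))) (tl z)"
    using Cons.IH hd_Cons Cons.prems(1) by (intro kapp_cong) simp
  finally show ?case by (simp add: act_word_Cons)
qed

lemma kapp_epsg_1:
  assumes "z \<in> idx d (Suc (Suc n))"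
  shows "kapp d (Suc (Suc n)) (epsg q (Suc (Suc n)) 1) v z
       = (\<Sum>a<d. \<Sum>e<d. gq q (z ! 0) (z ! 1) a e * v (a # e # drop 2 z))"
proof -
  obtain z0 z1 t where z: "z = z0 # z1 # t" "t \<in> idx d n"
    using assms by (cases z; cases "tl z") (auto simp: idx_def)
  have "epsg q (Suc (Suc n)) 1 (z0 # z1 # t) (a # e # y) = (if y = t then gq q z0 z1 a e else 0)"
    if "y \<in> idx d n" for a e y
  proof -
    have "(\<forall>j<Suc (Suc n). j \<noteq> 0 \<and> j \<noteq> 1 \<longrightarrow> (z0 # z1 # t) ! j = (a # e # y) ! j) = (y = t)"
      using that z(2) by (auto simp: All_less_Suc2 idx_def intro: nth_equalityI)
    then show ?thesis unfolding epsg_def by simp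
  qed
  then show ?thesis
    unfolding kapp_def sum_idx_Suc z(1) using z(2)
    by (simp add: if_zero_mult)
qed

section \<open>The cycle sum on a q-wedge\<close>

lemma gq_sum:
  assumes "a < d" "e < d"
  shows "(\<Sum>f<d. gq q c f a e * Y f) =
    (if a < e then (if c = e then minus_mu q * Y a else 0)
     else if a = e then (if c = a then - Y a else 0)
     else (if c = a then complex_of_real (q - 1) * Y e else 0) + (if c = e then minus_mu q * Y a else 0))"
proof -
  consider "a < e" | "a = e" | "e < a" by linarith
  then show ?thesis
  proof cases
    case 1
    then have "gq q c f a e = (if f = a then (if c = e then minus_mu q else 0) else 0)" for f
      by (auto simp: gq_def Let_def minus_mu_def)
    then show ?thesis using 1 assms by (simp add: if_zero_mult)
  next
    case 2
    then have "gq q c f a e = (if f = a then (if c = a then -1 else 0) else 0)" for f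
      by (auto simp: gq_def Let_def minus_mu_def)
    then show ?thesis using 2 assms by (simp add: if_zero_mult)
  next
    case 3
    then have "gq q c f a e = (if f = e then (if c = a then complex_of_real (q - 1) else 0) else 0)
       + (if f = a then (if c = e then minus_mu q else 0) else 0)" for f
      by (auto simp: gq_def Let_def minus_mu_def)
    then show ?thesis using 3 assms by (simp add: if_zero_mult distrib_right sum.distrib)
  qed
qed

definition qwedge_cons :: "real \<Rightarrow> nat set \<Rightarrow> nat \<Rightarrow> vec" where
  "qwedge_cons q W a z = (if a \<in> W then 0 else minus_mu q ^ rank_in W a * qwedge q (insert a W) z)"

lemma qwedge_cons_remove:
  "e \<in> W \<Longrightarrow> qwedge_cons q (W - {e}) e t = minus_mu q ^ rank_in W e * qwedge q W t"
  by (simp add: qwedge_cons_def rank_in_remove insert_absorb)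

lemma qwedge_cons_Cons_self:
  "q \<ge> 0 \<Longrightarrow> qwedge_cons q W a (a # t) = (if a \<in> W then 0 else complex_of_real q ^ rank_in W a * qwedge q W t)"
  by (simp add: qwedge_cons_def qwedge_Cons rank_in_insert_self minus_mu_power_square mult.assoc[symmetric])

lemma qwedge_cons_step_same:
  assumes "q \<ge> 0" "finite W" "W \<subseteq> {..<d}" "a < d"
  shows "qwedge q W t + (\<Sum>e\<in>W. minus_mu q ^ rank_in W e * (\<Sum>f<d. gq q a f a e * qwedge_cons q (W - {e}) f t))
       = qwedge_cons q W a (a # t)"
proof -
  let ?Q = "complex_of_real q" and ?O = "qwedge q W t"
  have summand: "minus_mu q ^ rank_in W e * (\<Sum>f<d. gq q a f a e * qwedge_cons q (W - {e}) f t)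
     = (if e < a then (?Q - 1) * ?Q ^ rank_in W e * ?O else 0) + (if e = a then - (?Q ^ rank_in W a * ?O) else 0)"
    if e: "e \<in> W" for e
  proof -
    have "e < d" using e assms(3) by auto
    then have "(\<Sum>f<d. gq q a f a e * qwedge_cons q (W - {e}) f t)
      = (if a < e then 0 else if a = e then - qwedge_cons q (W - {e}) a t
         else (?Q - 1) * qwedge_cons q (W - {e}) e t)"
      using gq_sum[OF assms(4)] by simp
    then show ?thesis
      using e by (auto simp: qwedge_cons_remove minus_mu_power_square[OF assms(1)] algebra_simps)
  qed
  have "(\<Sum>e\<in>W. minus_mu q ^ rank_in W e * (\<Sum>f<d. gq q a f a e * qwedge_cons q (W - {e}) f t))
      = (\<Sum>e\<in>W. (if e < a then (?Q - 1) * ?Q ^ rank_in W e * ?O else 0))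
        + (\<Sum>e\<in>W. (if e = a then - (?Q ^ rank_in W a * ?O) else 0))"
    by (simp add: summand sum.distrib del: sum.delta')
  also have "\<dots> = (?Q - 1) * (\<Sum>e\<in>{e\<in>W. e < a}. ?Q ^ rank_in W e) * ?O
      + (if a \<in> W then - (?Q ^ rank_in W a * ?O) else 0)"
  proof -
    have "(if e < a then (?Q - 1) * ?Q ^ rank_in W e * ?O else 0)
        = (?Q - 1) * (if e < a then ?Q ^ rank_in W e else 0) * ?O" for e
      by simp
    then show ?thesis
      using assms(2) by (simp add: sum.inter_filter sum_distrib_left sum_distrib_right)
  qed
  also have "\<dots> = (?Q ^ rank_in W a - 1) * ?O + (if a \<in> W then - (?Q ^ rank_in W a * ?O) else 0)"
    by (simp add: geometric_sum_rank_in[OF assms(2)])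
  finally show ?thesis
    by (simp add: qwedge_cons_Cons_self[OF assms(1)] algebra_simps)
qed

lemma qwedge_cons_step_other:
  assumes "finite W" "W \<subseteq> {..<d}" "a < d" "c \<noteq> a"
  shows "(\<Sum>e\<in>W. minus_mu q ^ rank_in W e * (\<Sum>f<d. gq q c f a e * qwedge_cons q (W - {e}) f t))
       = qwedge_cons q W a (c # t)"
proof -
  have "minus_mu q ^ rank_in W e * (\<Sum>f<d. gq q c f a e * qwedge_cons q (W - {e}) f t)
     = (if e = c then minus_mu q ^ rank_in W c * (minus_mu q * qwedge_cons q (W - {c}) a t) else 0)"
    if "e \<in> W" for e
  proof -
    have "e < d" using that assms(2) by auto
    then show ?thesis using assms(4) gq_sum[OF assms(3), of e q c] by auto
  qed
  then have "(\<Sum>e\<in>W. minus_mu q ^ rank_in W e * (\<Sum>f<d. gq q c f a e * qwedge_cons q (W - {e}) f t))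
     = (if c \<in> W then minus_mu q ^ (rank_in W c + 1) * qwedge_cons q (W - {c}) a t else 0)"
    using assms(1) by (simp add: mult.assoc)
  also have "\<dots> = qwedge_cons q W a (c # t)"
  proof (cases "c \<in> W \<and> a \<notin> W")
    case True
    then have "insert a (W - {c}) = insert a W - {c}" using assms(4) by auto
    moreover have "minus_mu q ^ (rank_in W c + 1) * minus_mu q ^ rank_in (W - {c}) a
        = minus_mu q ^ rank_in W a * minus_mu q ^ rank_in (insert a W) c"
      unfolding power_add[symmetric] rank_in_exchange[OF assms(1) conjunct1[OF True] conjunct2[OF True]] ..
    ultimately show ?thesis
      using True by (simp add: qwedge_cons_def qwedge_Cons mult.assoc[symmetric])
  next
    case False
    then show ?thesis using assms(4) by (auto simp: qwedge_cons_def qwedge_Cons)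
  qed
  finally show ?thesis .
qed

lemma qwedge_cons_Cons:
  assumes "q \<ge> 0" "finite W" "W \<subseteq> {..<d}" "a < d"
  shows "qwedge_cons q W a (c # t) = (if c = a then qwedge q W t else 0)
     + (\<Sum>e\<in>W. minus_mu q ^ rank_in W e * (\<Sum>f<d. gq q c f a e * qwedge_cons q (W - {e}) f t))"
  using qwedge_cons_step_same[OF assms] qwedge_cons_step_other[OF assms(2-4)] by (cases "c = a") auto

definition psi_tensor :: "nat \<Rightarrow> vec \<Rightarrow> vec" where
  "psi_tensor a u = (\<lambda>y. case y of [] \<Rightarrow> 0 | b # t \<Rightarrow> if b = a then u t else 0)"

lemma psi_tensor_Cons [simp]: "psi_tensor a u (b # t) = (if b = a then u t else 0)"
  by (simp add: psi_tensor_def)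

definition cycle_sum :: "nat \<Rightarrow> real \<Rightarrow> nat \<Rightarrow> vec \<Rightarrow> vec" where
  "cycle_sum d q n v z = (\<Sum>i\<le>n. act_word d q (Suc n) (rev [1..<Suc i]) v z)"

lemma cycle_sum_cong:
  "z \<in> idx d (Suc n) \<Longrightarrow> (\<And>y. y \<in> idx d (Suc n) \<Longrightarrow> v y = v' y) \<Longrightarrow> cycle_sum d q n v z = cycle_sum d q n v' z"
  unfolding cycle_sum_def by (intro sum.cong refl act_word_cong) auto

lemma cycle_sum_sum: "cycle_sum d q n (\<lambda>y. \<Sum>i\<in>I. f i y) z = (\<Sum>i\<in>I. cycle_sum d q n (f i) z)"
  unfolding cycle_sum_def act_word_sum by (rule sum.swap)

lemma cycle_sum_scale: "cycle_sum d q n (\<lambda>y. c * f y) z = c * cycle_sum d q n f z"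
  unfolding cycle_sum_def act_word_scale by (simp add: sum_distrib_left)

lemma rev_upt_Suc_Suc: "rev [1..<Suc (Suc i)] = map Suc (rev [1..<Suc i]) @ [1]"
proof -
  have "[1..<Suc (Suc i)] = 1 # map Suc [1..<Suc i]"
    by (simp add: upt_conv_Cons map_Suc_upt del: upt_Suc)
  then show ?thesis by (simp add: rev_map)
qed

lemma cycle_sum_Suc:
  assumes "z \<in> idx d (Suc (Suc n))"
  shows "cycle_sum d q (Suc n) v z
    = v z + cycle_sum d q n (\<lambda>y. kapp d (Suc (Suc n)) (epsg q (Suc (Suc n)) 1) v (hd z # y)) (tl z)"
proof -
  have "act_word d q (Suc (Suc n)) (rev [1..<Suc (Suc i)]) v z
      = act_word d q (Suc n) (rev [1..<Suc i])
          (\<lambda>y. kapp d (Suc (Suc n)) (epsg q (Suc (Suc n)) 1) v (hd z # y)) (tl z)" for i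
    unfolding rev_upt_Suc_Suc act_word_append
    by (subst act_word_map_Suc) (use assms in \<open>auto simp: act_word_Cons\<close>)
  moreover have "(\<Sum>i\<le>Suc n. act_word d q (Suc (Suc n)) (rev [1..<Suc i]) v z)
     = act_word d q (Suc (Suc n)) (rev [1..<Suc 0]) v z
       + (\<Sum>i\<le>n. act_word d q (Suc (Suc n)) (rev [1..<Suc (Suc i)]) v z)"
    by (rule sum.atMost_Suc_shift)
  ultimately show ?thesis
    unfolding cycle_sum_def by simp
qed

lemma epsg_1_psi_tensor_qwedge:
  assumes "a < d" "W \<subseteq> {..<d}" "c < d" "y \<in> idx d (Suc n)"
  shows "kapp d (Suc (Suc n)) (epsg q (Suc (Suc n)) 1) (psi_tensor a (qwedge q W)) (c # y)
     = (\<Sum>e\<in>W. \<Sum>f<d. (minus_mu q ^ rank_in W e * gq q c f a e) * psi_tensor f (qwedge q (W - {e})) y)"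
proof -
  obtain y0 y' where y: "y = y0 # y'" "y0 < d"
    using assms(4) by (cases y) (auto simp: idx_def)
  have cy: "c # y \<in> idx d (Suc (Suc n))" using assms(3,4) by (auto simp: idx_def)
  have "kapp d (Suc (Suc n)) (epsg q (Suc (Suc n)) 1) (psi_tensor a (qwedge q W)) (c # y)
      = (\<Sum>e<d. gq q c y0 a e * qwedge q W (e # y'))"
    using assms(1) y unfolding kapp_epsg_1[OF cy] by (simp add: if_distrib[of "\<lambda>u. _ * u"] sum_if_zero cong: if_cong)
  also have "\<dots> = (\<Sum>e\<in>W. gq q c y0 a e * (minus_mu q ^ rank_in W e * qwedge q (W - {e}) y'))"
    using assms(2) by (simp add: qwedge_Cons if_distrib[of "\<lambda>u. _ * u"] sum.If_cases Int_absorb1 cong: if_cong)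
  also have "\<dots> = (\<Sum>e\<in>W. \<Sum>f<d. (minus_mu q ^ rank_in W e * gq q c f a e) * psi_tensor f (qwedge q (W - {e})) y)"
    using y by (simp add: if_distrib[of "\<lambda>u. _ * u"] mult_ac cong: if_cong)
  finally show ?thesis .
qed

lemma cycle_sum_psi_tensor_qwedge:
  assumes "q \<ge> 0" "a < d" "W \<subseteq> {..<d}" "card W = n" "z \<in> idx d (Suc n)"
  shows "cycle_sum d q n (psi_tensor a (qwedge q W)) z = qwedge_cons q W a z"
  using assms(2-5)
proof (induction n arbitrary: a W z)
  case 0
  then have "W = {}" using finite_subset[OF 0(2)] by auto
  moreover obtain c where "z = [c]" using 0(4) by (cases z) (auto simp: idx_def)
  ultimately show ?case by (auto simp: cycle_sum_def qwedge_cons_def qwedge_Cons rank_in_insert_self)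
next
  case (Suc n)
  have fin: "finite W" using finite_subset[OF Suc.prems(2)] by auto
  obtain c t where z: "z = c # t" "c < d" "t \<in> idx d (Suc n)"
    using Suc.prems(4) by (cases z) (auto simp: idx_def)
  have IH: "cycle_sum d q n (psi_tensor f (qwedge q (W - {e}))) t = qwedge_cons q (W - {e}) f t"
    if "e \<in> W" "f < d" for e f
    using Suc.IH[OF that(2) _ _ z(3), of "W - {e}"] Suc.prems(2,3) fin that(1) by auto
  have "cycle_sum d q n (\<lambda>y. kapp d (Suc (Suc n)) (epsg q (Suc (Suc n)) 1) (psi_tensor a (qwedge q W)) (c # y)) t
      = cycle_sum d q n (\<lambda>y. \<Sum>e\<in>W. \<Sum>f<d.
          (minus_mu q ^ rank_in W e * gq q c f a e) * psi_tensor f (qwedge q (W - {e})) y) t"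
    by (rule cycle_sum_cong[OF z(3)]) (rule epsg_1_psi_tensor_qwedge[OF Suc.prems(1,2) z(2)])
  also have "\<dots> = (\<Sum>e\<in>W. \<Sum>f<d. (minus_mu q ^ rank_in W e * gq q c f a e) * qwedge_cons q (W - {e}) f t)"
    unfolding cycle_sum_sum cycle_sum_scale by (intro sum.cong refl) (simp add: IH)
  finally have "cycle_sum d q (Suc n) (psi_tensor a (qwedge q W)) z
      = (if c = a then qwedge q W t else 0)
        + (\<Sum>e\<in>W. minus_mu q ^ rank_in W e * (\<Sum>f<d. gq q c f a e * qwedge_cons q (W - {e}) f t))"
    using cycle_sum_Suc[OF Suc.prems(4)] z(1) by (simp add: sum_distrib_left mult.assoc)
  also have "\<dots> = qwedge_cons q W a z"
    using qwedge_cons_Cons[OF assms(1) fin Suc.prems(2,1)] z(1) by simp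
  finally show ?case .
qed

section \<open>Closed form of eps(A_m)\<close>

definition wedge_kernel :: "real \<Rightarrow> kern" where
  "wedge_kernel q z x = (if distinct x then minus_mu q ^ inversions x * qwedge q (set x) z else 0)"

lemma wedge_kernel_sym:
  "wedge_kernel q z x = (if distinct z then minus_mu q ^ inversions z * qwedge q (set z) x else 0)"
  by (auto simp: wedge_kernel_def qwedge_def)

lemma Aw_letters: "w \<in> set (Aw m) \<Longrightarrow> set w \<subseteq> {1..}"
  by (induction m arbitrary: w rule: Aw.induct) auto

lemma epsA_eq_sum_act_word:
  assumes "z \<in> idx d m" "x \<in> idx d m"
  shows "epsA d q m z x = (\<Sum>j<length (Aw m). act_word d q m (Aw m ! j) (\<lambda>y. kid y x) z)"
  unfolding epsA_def sum_list_sum_nth atLeast0LessThan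
  using assms by (simp add: kapp_epsw[symmetric] kapp_kid_column)

lemma sum_list_concat: "sum_list (concat xss) = sum_list (map sum_list (xss :: 'a::monoid_add list list))"
  by (induction xss) auto

lemma epsA_Suc_Suc:
  assumes "z \<in> idx d (Suc (Suc n))" "x \<in> idx d (Suc (Suc n))"
  shows "epsA d q (Suc (Suc n)) z x =
    (\<Sum>i<Suc (Suc n). act_word d q (Suc (Suc n)) (rev [1..<Suc i]) (\<lambda>y. \<Sum>j<length (Aw (Suc n)).
        act_word d q (Suc (Suc n)) (map Suc (Aw (Suc n) ! j)) (\<lambda>y. kid y x) y) z)"
proof -
  let ?L = "Aw (Suc n)" and ?m = "Suc (Suc n)"
  have "epsA d q ?m z x = sum_list (map (\<lambda>w. act_word d q ?m w (\<lambda>y. kid y x) z) (Aw ?m))"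
    unfolding epsA_def using assms
    by (intro arg_cong[where f = sum_list] map_cong refl) (simp add: kapp_epsw[symmetric] kapp_kid_column)
  also have "\<dots> = (\<Sum>i<?m. sum_list (map (\<lambda>w. act_word d q ?m (rev [1..<Suc i] @ map Suc w) (\<lambda>y. kid y x) z) ?L))"
    by (simp only: Aw.simps map_concat sum_list_concat map_map o_def
        interv_sum_list_conv_sum_set_nat set_upt atLeast0LessThan)
  also have "\<dots> = (\<Sum>i<?m. act_word d q ?m (rev [1..<Suc i])
      (\<lambda>y. \<Sum>j<length ?L. act_word d q ?m (map Suc (?L ! j)) (\<lambda>y. kid y x) y) z)"
    by (simp add: sum_list_sum_nth atLeast0LessThan act_word_append act_word_sum)
  finally show ?thesis .
qed

text \<open>The shifted copy sigma(A_(n+1)) acts on the last n + 1 tensor factors only.\<close>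

lemma sum_act_word_shifted_Aw:
  assumes "y \<in> idx d (Suc (Suc n))" "x' \<in> idx d (Suc n)"
  shows "(\<Sum>j<length (Aw (Suc n)). act_word d q (Suc (Suc n)) (map Suc (Aw (Suc n) ! j)) (\<lambda>u. kid u (c # x')) y)
       = psi_tensor c (\<lambda>y'. epsA d q (Suc n) y' x') y"
proof -
  obtain y0 y' where y: "y = y0 # y'" "y' \<in> idx d (Suc n)"
    using assms(1) by (cases y) (auto simp: idx_def)
  have "act_word d q (Suc (Suc n)) (map Suc w) (\<lambda>u. kid u (c # x')) y
      = (if y0 = c then act_word d q (Suc n) w (\<lambda>u. kid u x') y' else 0)"
    if "w \<in> set (Aw (Suc n))" for w
    using act_word_map_Suc[OF Aw_letters[OF that] assms(1)] y
    by (simp add: kid_def cong: if_cong)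
  then show ?thesis
    using y assms(2) by (simp add: epsA_eq_sum_act_word sum_if_zero)
qed

lemma epsA_eq_wedge_kernel:
  assumes "q \<ge> 0"
  shows "z \<in> idx d m \<Longrightarrow> x \<in> idx d m \<Longrightarrow> epsA d q m z x = wedge_kernel q z x"
proof (induction m arbitrary: z x rule: Aw.induct)
  case 1
  then show ?case by (simp add: epsA_def wedge_kernel_def kid_def)
next
  case 2
  then obtain a b where "x = [a]" "z = [b]"
    by (auto simp: idx_def length_Suc_conv)
  then show ?case
    by (simp add: epsA_def wedge_kernel_def kid_def qwedge_Cons inversions_Cons rank_in_insert_self)
next
  case (3 n)
  obtain c x' where x: "x = c # x'" "c < d" "x' \<in> idx d (Suc n)"
    using "3.prems"(2) by (cases x) (auto simp: idx_def)
  define C where "C = (if distinct x' then minus_mu q ^ inversions x' else 0)"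
  have IH: "epsA d q (Suc n) y' x' = C * qwedge q (set x') y'" if "y' \<in> idx d (Suc n)" for y'
    using "3.IH"[of 0, OF _ that x(3)] by (simp add: wedge_kernel_def C_def del: upt_Suc)
  have "epsA d q (Suc (Suc n)) z x
      = cycle_sum d q (Suc n) (psi_tensor c (\<lambda>y'. epsA d q (Suc n) y' x')) z"
    unfolding epsA_Suc_Suc[OF "3.prems"] cycle_sum_def lessThan_Suc_atMost[symmetric]
    unfolding x(1) by (intro sum.cong refl act_word_cong[OF "3.prems"(1)] sum_act_word_shifted_Aw x(3))
  also have "\<dots> = C * cycle_sum d q (Suc n) (psi_tensor c (qwedge q (set x'))) z"
  proof -
    have "psi_tensor c (\<lambda>y'. epsA d q (Suc n) y' x') y = C * psi_tensor c (qwedge q (set x')) y"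
      if "y \<in> idx d (Suc (Suc n))" for y
      using that IH by (cases y) (auto simp: idx_def)
    then have "cycle_sum d q (Suc n) (psi_tensor c (\<lambda>y'. epsA d q (Suc n) y' x')) z
        = cycle_sum d q (Suc n) (\<lambda>y. C * psi_tensor c (qwedge q (set x')) y) z"
      by (rule cycle_sum_cong[OF "3.prems"(1)])
    then show ?thesis by (simp add: cycle_sum_scale)
  qed
  also have "\<dots> = wedge_kernel q z x"
  proof (cases "distinct x'")
    case True
    have "card (set x') = Suc n" "set x' \<subseteq> {..<d}"
      using True x(3) by (auto simp: distinct_card idx_def)
    with True show ?thesis
      using cycle_sum_psi_tensor_qwedge[OF assms x(2) _ _ "3.prems"(1)] x(1)
      by (simp add: C_def wedge_kernel_def qwedge_cons_def inversions_Cons_distinct power_add algebra_simps)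
  next
    case False
    then show ?thesis by (simp add: C_def wedge_kernel_def x(1))
  qed
  finally show ?case .
qed

lemma epsE_eq_wedge_kernel:
  "q \<ge> 0 \<Longrightarrow> z \<in> idx d m \<Longrightarrow> x \<in> idx d m \<Longrightarrow>
    epsE d q m z x = wedge_kernel q z x / complex_of_real (qfact q m)"
  by (simp add: epsE_def epsA_eq_wedge_kernel)

section \<open>Contraction with S\<close>

lemma kcomp_cap_cup:
  assumes "k \<le> d" "x \<in> idx d k" "z \<in> idx d k"
  shows "kcomp d (k + d) (ktens 0 d (kadj (vk u)) kid) (ktens k k kid (vk v)) z x
       = (\<Sum>m\<in>idx d (d - k). cnj (u (x @ m)) * v (m @ z))"
proof -
  have length_split: "k + d = k + ((d - k) + k)" using assms(1) by simp
  have "kcomp d (k + d) (ktens 0 d (kadj (vk u)) kid) (ktens k k kid (vk v)) z x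
      = (\<Sum>y\<in>idx d (k + ((d - k) + k)).
          cnj (u (take d y)) * kid z (drop d y) * (kid (take k y) x * v (drop k y)))"
    unfolding length_split using assms(2) by (simp add: kcomp_def ktens_def kadj_def vk_def idx_def)
  also have "\<dots> = (\<Sum>x1\<in>idx d k. \<Sum>m\<in>idx d (d - k). \<Sum>z1\<in>idx d k.
          cnj (u (take d (x1 @ m @ z1))) * kid z (drop d (x1 @ m @ z1))
          * (kid (take k (x1 @ m @ z1)) x * v (drop k (x1 @ m @ z1))))"
    by (simp only: sum_idx_append append_assoc)
  also have "\<dots> = (\<Sum>x1\<in>idx d k. \<Sum>m\<in>idx d (d - k). \<Sum>z1\<in>idx d k.
      if x1 = x then (if z1 = z then cnj (u (x @ m)) * v (m @ z) else 0) else 0)"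
    using assms(1) by (intro sum.cong refl) (auto simp: idx_def kid_def)
  also have "\<dots> = (\<Sum>m\<in>idx d (d - k). cnj (u (x @ m)) * v (m @ z))"
    using assms(2,3) by (simp add: sum_if_zero)
  finally show ?thesis .
qed

lemma sum_qwedge_contract:
  assumes "q \<ge> 0" "k \<le> d" "x \<in> idx d k" "z \<in> idx d k"
  shows "(\<Sum>m\<in>idx d (d - k). qwedge q {..<d} (x @ m) * qwedge q {..<d} (m @ z))
     = complex_of_real (qfact q (d - k)) * minus_mu q ^ (k * (d - k)) * wedge_kernel q z x"
proof (cases "distinct x \<and> distinct z \<and> set x = set z")
  case False
  then have zero: "qwedge q {..<d} (x @ m) * qwedge q {..<d} (m @ z) = 0" for m
    by (auto simp: qwedge_append)
  moreover have "wedge_kernel q z x = 0"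
    using False by (auto simp: wedge_kernel_def qwedge_def)
  then show ?thesis by (simp only: zero sum.neutral_const) simp
next
  case True
  then have xz: "distinct x" "distinct z" "set z = set x" by auto
  let ?X = "set x" and ?C = "{..<d} - set x"
  have "?X \<subseteq> {..<d}" using assms(3) by (auto simp: idx_def)
  moreover have cX: "card ?X = k"
    using distinct_card[of x] True assms(3) by (simp add: idx_def)
  ultimately have cC: "card ?C = d - k" by (simp add: card_Diff_subset finite_subset)
  have cross: "cross_count ?X ?C + cross_count ?C ?X = k * (d - k)"
    using cross_count_add_swap[of ?X ?C] cX cC by auto
  have summand: "qwedge q {..<d} (x @ m) * qwedge q {..<d} (m @ z)
      = minus_mu q ^ (inversions x + inversions z + k * (d - k)) * (qwedge q ?C m * qwedge q ?C m)" for m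
  proof (cases "distinct m \<and> set m = ?C")
    case True
    then have m: "distinct m" "set m = ?C" by auto
    have disj: "set x \<inter> set m = {}" "set x \<union> set m = {..<d}" "set m \<inter> set z = {}" "set m \<union> set z = {..<d}"
      using m xz \<open>?X \<subseteq> {..<d}\<close> by auto
    have "qwedge q {..<d} (x @ m) = minus_mu q ^ (inversions x + inversions m + cross_count (set x) (set m))"
      unfolding qwedge_append using m(1) xz(1,2) disj by (intro if_P conjI)
    moreover have "qwedge q {..<d} (m @ z) = minus_mu q ^ (inversions m + inversions z + cross_count (set m) (set z))"
      unfolding qwedge_append using m(1) xz(1,2) disj by (intro if_P conjI)
    ultimately have "qwedge q {..<d} (x @ m) = minus_mu q ^ (inversions x + inversions m + cross_count ?X ?C)"
      and "qwedge q {..<d} (m @ z) = minus_mu q ^ (inversions m + inversions z + cross_count ?C ?X)"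
      unfolding m(2) xz(3) .
    moreover have "qwedge q ?C m = minus_mu q ^ inversions m"
      using True by (simp add: qwedge_def)
    moreover have "(inversions x + inversions m + cross_count ?X ?C) + (inversions m + inversions z + cross_count ?C ?X)
        = (inversions x + inversions z + k * (d - k)) + (inversions m + inversions m)"
      using cross by simp
    ultimately show ?thesis
      by (simp only: power_add[symmetric])
  next
    case False
    then have "qwedge q {..<d} (x @ m) = 0" "qwedge q ?C m = 0"
      by (auto simp: qwedge_append qwedge_def)
    then show ?thesis by simp
  qed
  have "(\<Sum>m\<in>idx d (d - k). qwedge q {..<d} (x @ m) * qwedge q {..<d} (m @ z))
      = minus_mu q ^ (inversions x + inversions z + k * (d - k)) * complex_of_real (qfact q (d - k))"
    using sum_qwedge_square[OF assms(1) _ cC] by (simp add: summand flip: sum_distrib_left)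
  moreover have "wedge_kernel q z x = minus_mu q ^ (inversions x + inversions z)"
    using xz by (simp add: wedge_kernel_def qwedge_def power_add)
  ultimately show ?thesis by (simp add: power_add mult_ac)
qed

lemma qwedge_mult_qwedge_append:
  "qwedge q Z1 x1 * qwedge q Z2 x2 * qwedge q D (x1 @ x2) =
    (if Z1 \<inter> Z2 = {} \<and> Z1 \<union> Z2 = D then minus_mu q ^ cross_count Z1 Z2 else 0)
    * (qwedge q Z1 x1 * qwedge q Z1 x1) * (qwedge q Z2 x2 * qwedge q Z2 x2)"
proof (cases "distinct x1 \<and> set x1 = Z1 \<and> distinct x2 \<and> set x2 = Z2")
  case True
  then have "qwedge q Z1 x1 = minus_mu q ^ inversions x1" "qwedge q Z2 x2 = minus_mu q ^ inversions x2"
    by (simp_all add: qwedge_def)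
  then show ?thesis
    by (simp only: qwedge_append) (use True in \<open>auto simp: power_add\<close>)
next
  case False
  then have "qwedge q Z1 x1 = 0 \<or> qwedge q Z2 x2 = 0" by (auto simp: qwedge_def)
  then show ?thesis by auto
qed

lemma sum_wedge_kernel_tensor_qwedge:
  assumes "q \<ge> 0" "z1 \<in> idx d a" "z2 \<in> idx d b"
  shows "(\<Sum>x1\<in>idx d a. \<Sum>x2\<in>idx d b. wedge_kernel q z1 x1 * wedge_kernel q z2 x2 * qwedge q D (x1 @ x2))
       = complex_of_real (qfact q a * qfact q b) * qwedge q D (z1 @ z2)"
proof (cases "distinct z1 \<and> distinct z2")
  case False
  then show ?thesis by (auto simp: wedge_kernel_sym qwedge_append)
next
  case True
  let ?Z1 = "set z1" and ?Z2 = "set z2"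
  let ?c = "if ?Z1 \<inter> ?Z2 = {} \<and> ?Z1 \<union> ?Z2 = D then minus_mu q ^ cross_count ?Z1 ?Z2 else 0"
  have "card ?Z1 = a" "card ?Z2 = b" "?Z1 \<subseteq> {..<d}" "?Z2 \<subseteq> {..<d}"
    using True assms(2,3) by (auto simp: distinct_card idx_def)
  note squares = sum_qwedge_square[OF assms(1) this(3,1)] sum_qwedge_square[OF assms(1) this(4,2)]
  let ?K = "minus_mu q ^ inversions z1 * minus_mu q ^ inversions z2"
  have summand: "wedge_kernel q z1 x1 * wedge_kernel q z2 x2 * qwedge q D (x1 @ x2)
      = ?K * (qwedge q ?Z1 x1 * qwedge q ?Z2 x2 * qwedge q D (x1 @ x2))" for x1 x2
    using True by (simp add: wedge_kernel_sym mult_ac)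
  have "(\<Sum>x1\<in>idx d a. \<Sum>x2\<in>idx d b. wedge_kernel q z1 x1 * wedge_kernel q z2 x2 * qwedge q D (x1 @ x2))
      = (\<Sum>x1\<in>idx d a. \<Sum>x2\<in>idx d b.
          ?K * (?c * (qwedge q ?Z1 x1 * qwedge q ?Z1 x1) * (qwedge q ?Z2 x2 * qwedge q ?Z2 x2)))"
    by (simp only: summand qwedge_mult_qwedge_append)
  also have "\<dots> = ?K * ?c
      * ((\<Sum>x1\<in>idx d a. qwedge q ?Z1 x1 * qwedge q ?Z1 x1) * (\<Sum>x2\<in>idx d b. qwedge q ?Z2 x2 * qwedge q ?Z2 x2))"
    by (simp only: sum_product sum_distrib_left mult_ac) (rule sum.swap)
  also have "\<dots> = complex_of_real (qfact q a * qfact q b) * qwedge q D (z1 @ z2)"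
    using True by (simp add: squares qwedge_append power_add)
  finally show ?thesis .
qed

lemma epsE_tensor_fixes_Svec:
  assumes "q > 0" "a + b = d" "z \<in> idx d d"
  shows "kapp d d (ktens a a (epsE d q a) (epsE d q b)) (Svec d q) z = Svec d q z"
proof -
  have z: "take a z \<in> idx d a" "drop a z \<in> idx d b" "take a z @ drop a z = z"
    using assms(2,3) by (auto simp: idx_def dest: in_set_takeD in_set_dropD)
  have "kapp d d (ktens a a (epsE d q a) (epsE d q b)) (Svec d q) z
      = (\<Sum>x1\<in>idx d a. \<Sum>x2\<in>idx d b. wedge_kernel q (take a z) x1 * wedge_kernel q (drop a z) x2
          * qwedge q {..<d} (x1 @ x2)) / complex_of_real (qfact q a * qfact q b)"
    using assms(1) kapp_ktens[of d a b, unfolded assms(2)] z(1,2)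
    by (simp add: epsE_eq_wedge_kernel Svec_eq_qwedge sum_divide_distrib)
  also have "\<dots> = Svec d q z"
    using qfact_pos[OF assms(1), of a] qfact_pos[OF assms(1), of b]
    by (simp add: sum_wedge_kernel_tensor_qwedge[OF _ z(1,2)] assms(1) less_imp_le z(3) Svec_eq_qwedge)
  finally show ?thesis .
qed

lemma Svec_cap_cup:
  assumes "q > 0" "k \<le> d" "x \<in> idx d k" "z \<in> idx d k"
  shows "kcomp d (k + d) (ktens 0 d (kadj (vk (\<lambda>y. \<alpha> * Svec d q y))) kid) (ktens k k kid (vk (\<lambda>y. \<beta> * Svec d q y))) z x
     = cnj \<alpha> * \<beta> * complex_of_real (qfact q (d - k) * qfact q k) * minus_mu q ^ (k * (d - k)) * epsE d q k z x"
proof -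
  have "kcomp d (k + d) (ktens 0 d (kadj (vk (\<lambda>y. \<alpha> * Svec d q y))) kid) (ktens k k kid (vk (\<lambda>y. \<beta> * Svec d q y))) z x
      = cnj \<alpha> * \<beta> * (\<Sum>m\<in>idx d (d - k). qwedge q {..<d} (x @ m) * qwedge q {..<d} (m @ z))"
    by (simp add: kcomp_cap_cup[OF assms(2-4)] Svec_eq_qwedge sum_distrib_left mult_ac)
  then show ?thesis
    using qfact_pos[OF assms(1), of k] assms(1)
    by (simp add: sum_qwedge_contract[OF _ assms(2-4)] epsE_eq_wedge_kernel[OF _ assms(4,3)])
qed

definition R_scale :: "nat \<Rightarrow> real \<Rightarrow> nat \<Rightarrow> real" where
  "R_scale d q k = 1 / (sqrt q powr (real (k * (d - k)) / 2) * sqrt (qfact q k) * sqrt (qfact q (d - k)))"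

lemma Rvec_eq: "Rvec d q k = (\<lambda>y. complex_of_real (R_scale d q k) * Svec d q y)"
  by (simp add: Rvec_def R_scale_def)

lemma Rbar_eq: "Rbar d q k = (\<lambda>y. ((-1) ^ (k * (d - k)) * complex_of_real (R_scale d q k)) * Svec d q y)"
  by (simp add: Rbar_def Rvec_eq mult.assoc)

lemma R_scale_normalization:
  assumes "q > 0"
  shows "(-1) ^ (k * (d - k)) * complex_of_real (R_scale d q k) ^ 2
      * complex_of_real (qfact q (d - k) * qfact q k) * minus_mu q ^ (k * (d - k)) = 1"
proof -
  let ?N = "k * (d - k)"
  have "sqrt q powr (real ?N / 2) * sqrt q powr (real ?N / 2) = sqrt q ^ ?N"
    using assms by (simp add: powr_add[symmetric] powr_realpow del: of_nat_mult)
  then have "R_scale d q k ^ 2 * (qfact q (d - k) * qfact q k) * sqrt q ^ ?N = 1"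
    using qfact_pos[OF assms, of k] qfact_pos[OF assms, of "d - k"] assms
    by (simp add: R_scale_def power2_eq_square field_simps)
  moreover have "(-1) ^ ?N * minus_mu q ^ ?N = complex_of_real (sqrt q ^ ?N)"
    by (simp add: minus_mu_def flip: power_mult_distrib)
  ultimately show ?thesis
    by (metis mult.assoc mult.commute of_real_1 of_real_mult of_real_power)
qed

lemma Rvec_tensor_fixed:
  assumes "q > 0" "k \<le> d" "z \<in> idx d d"
  shows "kapp d d (ktens (d - k) (d - k) (epsE d q (d - k)) (epsE d q k)) (Rvec d q k) z = Rvec d q k z"
  using epsE_tensor_fixes_Svec[OF assms(1) _ assms(3), of "d - k" k] assms(2)
  by (simp add: Rvec_eq kapp_scale)

lemma Rbar_tensor_fixed:
  assumes "q > 0" "k \<le> d" "z \<in> idx d d"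
  shows "kapp d d (ktens k k (epsE d q k) (epsE d q (d - k))) (Rbar d q k) z = Rbar d q k z"
  using epsE_tensor_fixes_Svec[OF assms(1) _ assms(3), of k "d - k"] assms(2)
  by (simp add: Rbar_eq kapp_scale)

lemma Rbar_cap_Rvec:
  assumes "q > 0" "k \<le> d" "x \<in> idx d k" "z \<in> idx d k"
  shows "kcomp d (k + d) (ktens 0 d (kadj (vk (Rbar d q k))) kid) (ktens k k kid (vk (Rvec d q k))) z x
       = epsE d q k z x"
proof -
  let ?N = "k * (d - k)" and ?r = "complex_of_real (R_scale d q k)"
  have "cnj ((-1) ^ ?N * ?r) * ?r * complex_of_real (qfact q (d - k) * qfact q k) * minus_mu q ^ ?N = 1"
    using R_scale_normalization[OF assms(1), of k d] by (simp add: power2_eq_square mult_ac)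
  then show ?thesis
    unfolding Rvec_eq Rbar_eq by (simp only: Svec_cap_cup[OF assms] mult_1_left)
qed

lemma Rvec_cap_Rbar:
  assumes "q > 0" "k \<le> d" "x \<in> idx d (d - k)" "z \<in> idx d (d - k)"
  shows "kcomp d ((d - k) + d) (ktens 0 d (kadj (vk (Rvec d q k))) kid) (ktens (d - k) (d - k) kid (vk (Rbar d q k))) z x
       = epsE d q (d - k) z x"
proof -
  let ?N = "k * (d - k)" and ?r = "complex_of_real (R_scale d q k)"
  have "cnj ?r * ((-1) ^ ?N * ?r) * complex_of_real (qfact q (d - (d - k)) * qfact q (d - k))
      * minus_mu q ^ ((d - k) * (d - (d - k))) = 1"
    using R_scale_normalization[OF assms(1), of k d] assms(2) by (simp add: power2_eq_square mult_ac)
  then show ?thesis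
    unfolding Rvec_eq Rbar_eq by (simp only: Svec_cap_cup[OF assms(1) diff_le_self assms(3,4)] mult_1_left)
qed

theorem lemma5p6:
  fixes d k :: nat and q :: real
  assumes "q > 0" and "1 \<le> k" and "k < d"
  shows
   "(\<forall>z\<in>idx d k. \<forall>x\<in>idx d k.
       kcomp d (k + d) (ktens 0 d (kadj (vk (Svec d q))) kid) (ktens k k kid (vk (Svec d q))) z x
       = complex_of_real (qfact q (d - k) * qfact q k) * (- complex_of_real (sqrt q)) ^ (k * (d - k))
         * epsE d q k z x)
    \<and> (\<exists>v. \<forall>z\<in>idx d d. Rvec d q k z = kapp d d (ktens (d - k) (d - k) (epsE d q (d - k)) (epsE d q k)) v z)
    \<and> (\<exists>v. \<forall>z\<in>idx d d. Rbar d q k z = kapp d d (ktens k k (epsE d q k) (epsE d q (d - k))) v z)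
    \<and> (\<forall>z\<in>idx d k. \<forall>x\<in>idx d k.
       kcomp d (k + d) (ktens 0 d (kadj (vk (Rbar d q k))) kid) (ktens k k kid (vk (Rvec d q k))) z x
       = epsE d q k z x)
    \<and> (\<forall>z\<in>idx d (d - k). \<forall>x\<in>idx d (d - k).
       kcomp d ((d - k) + d) (ktens 0 d (kadj (vk (Rvec d q k))) kid) (ktens (d - k) (d - k) kid (vk (Rbar d q k))) z x
       = epsE d q (d - k) z x)"
proof -
  have "k \<le> d" using assms(3) by simp
  then show ?thesis
    using Svec_cap_cup[OF assms(1), of k d _ _ 1 1] Rbar_cap_Rvec[OF assms(1)] Rvec_cap_Rbar[OF assms(1)]
      Rvec_tensor_fixed[OF assms(1), symmetric] Rbar_tensor_fixed[OF assms(1), symmetric]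
    by (auto simp: minus_mu_def)
qed

end
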